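(* (i) Let $\epsilon>0$ and $J_u\in\mathbb{R}^{|\mathcal{X}|}$ with $\sum_xJ_u(x)=0$ and $\sum_x|J_u(x)|\le1$. Then every vector in $\mathbb{S}_u=\{y\in\mathbb{R}^{|\mathcal{Y}|}: My=MP_Y+\epsilon M\begin{bmatrix}P_{X|Y_1}^{-1}J_u\\0\end{bmatrix},\ y\ge0\}$ is a probability vector (nonnegative entries summing to one). (ii) Let $(U,Y)$ be a pair of random variables, $U$ on a finite alphabet $\mathcal{U}$, with $Y$-marginal $P_Y$, and let $\{J_u\}_{u\in\mathcal{U}}$ satisfy (P1), (P2), (P3) and $P_{Y|U=u}\in\mathbb{S}_u$ for all $u\in\mathcal{U}$. Define $X$ through $P_{XYU}(x,y,u)=P_{X|Y}(x|y)P_{YU}(y,u)$, so that $X-Y-U$ is a Markov chain. Then $P_{X|U=u}-P_X=\epsilon J_u$ for all $u$.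
   Context: Setting: $X,Y$ on finite alphabets with $|\mathcal{X}|<|\mathcal{Y}|$, joint pmf $P_{XY}$, marginal vectors $P_X,P_Y$ with positive entries. $P_{X|Y}\in\mathbb{R}^{|\mathcal{X}|\times|\mathcal{Y}|}$ (columns are the distributions $P_{X|Y=y}$) has full row rank and $P_{X|Y}=[P_{X|Y_1},P_{X|Y_2}]$ with $P_{X|Y_1}$ (first $|\mathcal{X}|$ columns) invertible. With an SVD $P_{X|Y}=U\Sigma V^T$, $V=[v_1,\dots,v_{|\mathcal{Y}|}]$, set $M=[v_1,\dots,v_{|\mathcal{X}|}]^T$. The zero block has size $|\mathcal{Y}|-|\mathcal{X}|$. Properties: (P1) $\sum_x J_u(x)=0$ for all $u$; (P2) $\sum_u P_U(u)J_u(x)=0$ for all $x$; (P3) $\sum_x|J_u(x)|\le1$ for all $u$. *)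

theory Defs
  imports "Jordan_Normal_Form.Gauss_Jordan_Elimination"
begin

text \<open>Alphabets: X = {0..<n}, Y = {0..<m}. The joint pmf P_XY is an n x m matrix.\<close>

definition marg_Y :: "real mat \<Rightarrow> real vec" where
  "marg_Y PXY = vec (dim_col PXY) (\<lambda>y. \<Sum>x<dim_row PXY. PXY $$ (x, y))"

definition marg_X :: "real mat \<Rightarrow> real vec" where
  "marg_X PXY = vec (dim_row PXY) (\<lambda>x. \<Sum>y<dim_col PXY. PXY $$ (x, y))"

definition cond_XgY :: "real mat \<Rightarrow> real mat" where
  "cond_XgY PXY = mat (dim_row PXY) (dim_col PXY)
     (\<lambda>(x, y). PXY $$ (x, y) / marg_Y PXY $ y)"

definition first_block :: "real mat \<Rightarrow> real mat" where
  "first_block A = mat (dim_row A) (dim_row A) (\<lambda>(i, j). A $$ (i, j))"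

definition is_svd :: "real mat \<Rightarrow> real mat \<Rightarrow> real mat \<Rightarrow> real mat \<Rightarrow> bool" where
  "is_svd A U Sig V \<longleftrightarrow>
     U \<in> carrier_mat (dim_row A) (dim_row A) \<and>
     V \<in> carrier_mat (dim_col A) (dim_col A) \<and>
     Sig \<in> carrier_mat (dim_row A) (dim_col A) \<and>
     U * transpose_mat U = 1\<^sub>m (dim_row A) \<and> transpose_mat U * U = 1\<^sub>m (dim_row A) \<and>
     V * transpose_mat V = 1\<^sub>m (dim_col A) \<and> transpose_mat V * V = 1\<^sub>m (dim_col A) \<and>
     (\<forall>i<dim_row A. \<forall>j<dim_col A. i \<noteq> j \<longrightarrow> Sig $$ (i, j) = 0) \<and>
     (\<forall>i<min (dim_row A) (dim_col A). Sig $$ (i, i) \<ge> 0) \<and>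
     (\<forall>i j. i \<le> j \<and> j < min (dim_row A) (dim_col A) \<longrightarrow> Sig $$ (j, j) \<le> Sig $$ (i, i)) \<and>
     A = U * Sig * transpose_mat V"

definition M_of :: "nat \<Rightarrow> real mat \<Rightarrow> real mat" where
  "M_of n V = mat n (dim_row V) (\<lambda>(i, j). V $$ (j, i))"

definition lift_vec :: "real mat \<Rightarrow> real vec \<Rightarrow> real vec" where
  "lift_vec PXgY J = (let w = the (mat_inverse (first_block PXgY)) *\<^sub>v J in
     vec (dim_col PXgY) (\<lambda>j. if j < dim_row PXgY then w $ j else 0))"

definition S_set :: "real mat \<Rightarrow> real mat \<Rightarrow> real \<Rightarrow> real vec \<Rightarrow> real vec set" where
  "S_set PXY V eps J =
    (let P = cond_XgY PXY; M = M_of (dim_row PXY) V in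
     {y \<in> carrier_vec (dim_col PXY).
        M *\<^sub>v y = M *\<^sub>v marg_Y PXY + eps \<cdot>\<^sub>v (M *\<^sub>v lift_vec P J) \<and>
        (\<forall>j<dim_col PXY. y $ j \<ge> 0)})"

definition is_prob_vec :: "real vec \<Rightarrow> bool" where
  "is_prob_vec y \<longleftrightarrow> (\<forall>j<dim_vec y. y $ j \<ge> 0) \<and> (\<Sum>j<dim_vec y. y $ j) = 1"

end

theory Submission
  imports Defs
begin

text \<open>
  Write \<open>P = P\<^sub>X\<^sub>|\<^sub>Y = U \<Sigma> V\<^sup>T\<close>. Since \<open>\<Sigma>\<close> vanishes off the diagonal, \<open>P\<close> only sees the
  first \<open>|X|\<close> coordinates of \<open>V\<^sup>T y\<close>, i.e. \<open>M y\<close>; hence \<open>M y = M y'\<close> implies \<open>P y = P y'\<close>.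
  Applied to the defining equation of \<open>S\<^sub>u\<close>, and using \<open>P P\<^sub>Y = P\<^sub>X\<close> and
  \<open>P [P\<^sub>1\<^sup>-\<^sup>1 J; 0] = J\<close>, every \<open>y \<in> S\<^sub>u\<close> satisfies \<open>P y = P\<^sub>X + \<epsilon> J\<close>.
  As the columns of \<open>P\<close> are distributions, summing this identity gives \<open>\<Sum> y = 1 + \<epsilon> \<Sum> J = 1\<close>,
  which is (i); for \<open>y = P\<^sub>Y\<^sub>|\<^sub>U\<^sub>=\<^sub>u\<close> the left-hand side is \<open>P\<^sub>X\<^sub>|\<^sub>U\<^sub>=\<^sub>u\<close> by the Markov chain, which is (ii).
\<close>

lemma invertible_mat_mat_inverse:
  fixes A :: "'a :: field mat"
  assumes A: "A \<in> carrier_mat n n" and inv: "invertible_mat A"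
  shows "A * the (mat_inverse A) = 1\<^sub>m n" "the (mat_inverse A) \<in> carrier_mat n n"
proof -
  from inv obtain B where AB: "A * B = 1\<^sub>m n" "B * A = 1\<^sub>m (dim_row B)"
    using A unfolding invertible_mat_def inverts_mat_def by auto
  have "B \<in> carrier_mat n n"
    using arg_cong[OF AB(1), of dim_col] arg_cong[OF AB(2), of dim_col] A by auto
  then have "A \<in> Units (ring_mat TYPE('a) n ())"
    using A AB unfolding Units_def ring_mat_def by auto
  then have "mat_inverse A \<noteq> None"
    using mat_inverse(1)[OF A, of "()"] by auto
  then obtain C where "mat_inverse A = Some C" by blast
  then show "A * the (mat_inverse A) = 1\<^sub>m n" "the (mat_inverse A) \<in> carrier_mat n n"
    using mat_inverse(2)[OF A] by auto
qed

lemma mult_mat_vec_pad_zeros: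
  fixes A :: "real mat"
  assumes A: "A \<in> carrier_mat n m" and nm: "n \<le> m" and w: "w \<in> carrier_vec n"
  shows "A *\<^sub>v vec m (\<lambda>j. if j < n then w $ j else 0) = first_block A *\<^sub>v w"
proof (rule eq_vecI)
  fix i assume "i < dim_vec (first_block A *\<^sub>v w)"
  then have i: "i < n" using A by (simp add: first_block_def)
  have "(A *\<^sub>v vec m (\<lambda>j. if j < n then w $ j else 0)) $ i
      = (\<Sum>j<m. if j < n then A $$ (i, j) * w $ j else 0)"
    using A i by (auto simp: scalar_prod_def lessThan_atLeast0 intro!: sum.cong)
  also have "\<dots> = (\<Sum>j\<in>{..<m} \<inter> {j. j < n}. A $$ (i, j) * w $ j)"
    by (simp add: sum.inter_restrict)
  also have "{..<m} \<inter> {j. j < n} = {..<n}" using nm by auto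
  finally show "(A *\<^sub>v vec m (\<lambda>j. if j < n then w $ j else 0)) $ i = (first_block A *\<^sub>v w) $ i"
    using A w i by (simp add: first_block_def scalar_prod_def lessThan_atLeast0)
qed (use A in \<open>simp add: first_block_def\<close>)

lemma mult_lift_vec:
  fixes P :: "real mat"
  assumes P: "P \<in> carrier_mat n m" and nm: "n \<le> m" and inv: "invertible_mat (first_block P)"
    and J: "J \<in> carrier_vec n"
  shows "P *\<^sub>v lift_vec P J = J"
proof -
  define B where "B = the (mat_inverse (first_block P))"
  have FB: "first_block P \<in> carrier_mat n n" using P by (simp add: first_block_def)
  note B = invertible_mat_mat_inverse[OF FB inv, folded B_def]
  have "P *\<^sub>v lift_vec P J = first_block P *\<^sub>v (B *\<^sub>v J)"
    using P B(2) J nm by (simp add: lift_vec_def B_def[symmetric] mult_mat_vec_pad_zeros)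
  also have "\<dots> = J"
    using B J FB by (simp flip: assoc_mult_mat_vec)
  finally show ?thesis .
qed

lemma is_svd_carrier:
  assumes "A \<in> carrier_mat n m" and "is_svd A U Sig V"
  shows "U \<in> carrier_mat n n" "V \<in> carrier_mat m m" "Sig \<in> carrier_mat n m"
  using assms by (auto simp: is_svd_def)

lemma svd_mult_vec_eq_0_if_M_of_mult_vec_eq_0:
  fixes A :: "real mat"
  assumes A: "A \<in> carrier_mat n m" and svd: "is_svd A U Sig V"
    and d: "d \<in> carrier_vec m" and Md: "M_of n V *\<^sub>v d = 0\<^sub>v n"
  shows "A *\<^sub>v d = 0\<^sub>v n"
proof -
  have U: "U \<in> carrier_mat n n" and V: "V \<in> carrier_mat m m" and S: "Sig \<in> carrier_mat n m"
    using is_svd_carrier[OF A svd] by auto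
  have Sig_diag: "\<forall>i<n. \<forall>j<m. i \<noteq> j \<longrightarrow> Sig $$ (i, j) = 0"
    and A_eq: "A = U * Sig * transpose_mat V"
    using svd A unfolding is_svd_def by auto
  define e where "e = transpose_mat V *\<^sub>v d"
  have e: "e \<in> carrier_vec m" using V d by (simp add: e_def)
  have e_0: "e $ i = 0" if "i < n" "i < m" for i
  proof -
    have "e $ i = (M_of n V *\<^sub>v d) $ i"
      using that V d by (simp add: e_def M_of_def scalar_prod_def)
    then show ?thesis using Md that by simp
  qed
  have "Sig *\<^sub>v e = 0\<^sub>v n"
  proof (rule eq_vecI)
    fix i assume "i < dim_vec (0\<^sub>v n :: real vec)"
    then have i: "i < n" by simp
    have "(Sig *\<^sub>v e) $ i = (\<Sum>j<m. Sig $$ (i, j) * e $ j)"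
      using S e i by (simp add: scalar_prod_def lessThan_atLeast0)
    also have "\<dots> = 0"
      using Sig_diag i e_0 by (intro sum.neutral) auto
    finally show "(Sig *\<^sub>v e) $ i = 0\<^sub>v n $ i" using i by simp
  qed (use S in auto)
  moreover have "A *\<^sub>v d = U *\<^sub>v (Sig *\<^sub>v e)"
    using assoc_mult_mat_vec[OF mult_carrier_mat[OF U S] transpose_carrier_mat[THEN iffD2, OF V] d]
      assoc_mult_mat_vec[OF U S e] by (simp add: A_eq e_def)
  ultimately show ?thesis
    using U by auto
qed

lemma cond_XgY_carrier: "PXY \<in> carrier_mat n m \<Longrightarrow> cond_XgY PXY \<in> carrier_mat n m"
  by (simp add: cond_XgY_def)

lemma cond_XgY_col_sum:
  assumes PXY: "PXY \<in> carrier_mat n m" and y: "y < m" and PY: "marg_Y PXY $ y \<noteq> 0"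
  shows "(\<Sum>x<n. cond_XgY PXY $$ (x, y)) = 1"
  using PXY y PY by (simp add: cond_XgY_def marg_Y_def flip: sum_divide_distrib)

lemma cond_XgY_mult_marg_Y:
  assumes PXY: "PXY \<in> carrier_mat n m" and PY: "\<forall>y<m. marg_Y PXY $ y \<noteq> 0"
  shows "cond_XgY PXY *\<^sub>v marg_Y PXY = marg_X PXY"
proof (rule eq_vecI)
  fix x assume "x < dim_vec (marg_X PXY)"
  then have x: "x < n" using PXY by (simp add: marg_X_def)
  have "(cond_XgY PXY *\<^sub>v marg_Y PXY) $ x = (\<Sum>y<m. PXY $$ (x, y) / marg_Y PXY $ y * marg_Y PXY $ y)"
    using PXY x by (simp add: cond_XgY_def scalar_prod_def lessThan_atLeast0 marg_Y_def)
  also have "\<dots> = (\<Sum>y<m. PXY $$ (x, y))"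
    using PY by (intro sum.cong) auto
  finally show "(cond_XgY PXY *\<^sub>v marg_Y PXY) $ x = marg_X PXY $ x"
    using PXY x by (simp add: marg_X_def)
qed (use PXY in \<open>simp add: cond_XgY_def marg_X_def\<close>)

lemma sum_mult_mat_vec_col_stochastic:
  fixes P :: "'a :: comm_semiring_1 mat"
  assumes P: "P \<in> carrier_mat n m" and cols: "\<forall>j<m. (\<Sum>i<n. P $$ (i, j)) = 1"
    and y: "y \<in> carrier_vec m"
  shows "(\<Sum>i<n. (P *\<^sub>v y) $ i) = (\<Sum>j<m. y $ j)"
proof -
  have "(\<Sum>i<n. (P *\<^sub>v y) $ i) = (\<Sum>i<n. \<Sum>j<m. P $$ (i, j) * y $ j)"
    using P y by (simp add: scalar_prod_def lessThan_atLeast0)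
  also have "\<dots> = (\<Sum>j<m. (\<Sum>i<n. P $$ (i, j)) * y $ j)"
    by (subst sum.swap) (simp add: sum_distrib_right)
  also have "\<dots> = (\<Sum>j<m. y $ j)"
    using cols by simp
  finally show ?thesis .
qed

lemma S_set_carrier_nonneg:
  assumes "y \<in> S_set PXY V eps J"
  shows "y \<in> carrier_vec (dim_col PXY)" "\<forall>j<dim_col PXY. y $ j \<ge> 0"
  using assms by (simp_all add: S_set_def Let_def)

lemma cond_XgY_mult_S_set:
  assumes PXY: "PXY \<in> carrier_mat n m" and nm: "n \<le> m"
    and PY: "\<forall>y<m. marg_Y PXY $ y \<noteq> 0"
    and inv: "invertible_mat (first_block (cond_XgY PXY))"
    and svd: "is_svd (cond_XgY PXY) U Sig V"
    and J: "J \<in> carrier_vec n" and y: "y \<in> S_set PXY V eps J"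
  shows "cond_XgY PXY *\<^sub>v y = marg_X PXY + eps \<cdot>\<^sub>v J"
proof -
  define P where "P = cond_XgY PXY"
  define M where "M = M_of n V"
  define w where "w = marg_Y PXY + eps \<cdot>\<^sub>v lift_vec P J"
  have P: "P \<in> carrier_mat n m" using PXY by (simp add: P_def cond_XgY_carrier)
  have "V \<in> carrier_mat m m" using is_svd_carrier(2)[OF P svd[folded P_def]] .
  then have M: "M \<in> carrier_mat n m" by (simp add: M_def M_of_def)
  have PY_carrier: "marg_Y PXY \<in> carrier_vec m" using PXY by (simp add: marg_Y_def)
  have L: "lift_vec P J \<in> carrier_vec m" using P by (simp add: lift_vec_def Let_def)
  have w: "w \<in> carrier_vec m" using PY_carrier L by (simp add: w_def)
  have y_carrier: "y \<in> carrier_vec m" using S_set_carrier_nonneg(1)[OF y] PXY by simp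
  have "M *\<^sub>v y = M *\<^sub>v w"
    using y PXY M PY_carrier L
    by (simp add: S_set_def Let_def P_def M_def w_def mult_add_distrib_mat_vec mult_mat_vec)
  then have "M *\<^sub>v (y - w) = 0\<^sub>v n"
    using M y_carrier w by (simp add: mult_minus_distrib_mat_vec)
  then have Pd: "P *\<^sub>v (y - w) = 0\<^sub>v n"
    using svd_mult_vec_eq_0_if_M_of_mult_vec_eq_0[OF P svd[folded P_def]] y_carrier w
    by (simp add: M_def)
  have "(P *\<^sub>v y) $ i = (P *\<^sub>v w) $ i" if "i < n" for i
    using arg_cong[OF Pd, of "\<lambda>v. v $ i"] that P y_carrier w
    by (simp add: mult_minus_distrib_mat_vec)
  then have "P *\<^sub>v y = P *\<^sub>v w"
    using P by (intro eq_vecI) auto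
  also have "\<dots> = P *\<^sub>v marg_Y PXY + eps \<cdot>\<^sub>v (P *\<^sub>v lift_vec P J)"
    using P PY_carrier L by (simp add: w_def mult_add_distrib_mat_vec mult_mat_vec)
  also have "\<dots> = marg_X PXY + eps \<cdot>\<^sub>v J"
    using cond_XgY_mult_marg_Y[OF PXY PY] mult_lift_vec[OF P nm inv[folded P_def] J]
    by (simp add: P_def)
  finally show ?thesis by (simp add: P_def)
qed

lemma S_set_is_prob_vec:
  assumes PXY: "PXY \<in> carrier_mat n m" and nm: "n \<le> m"
    and PXY_sum: "(\<Sum>x<n. \<Sum>y<m. PXY $$ (x, y)) = 1"
    and PY: "\<forall>y<m. marg_Y PXY $ y \<noteq> 0"
    and inv: "invertible_mat (first_block (cond_XgY PXY))"
    and svd: "is_svd (cond_XgY PXY) U Sig V"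
    and J: "J \<in> carrier_vec n" and J_sum: "(\<Sum>x<n. J $ x) = 0"
    and y: "y \<in> S_set PXY V eps J"
  shows "is_prob_vec y"
proof -
  have y_carrier: "y \<in> carrier_vec m" and y_nonneg: "\<forall>j<m. y $ j \<ge> 0"
    using S_set_carrier_nonneg[OF y] PXY by auto
  have "(\<Sum>j<m. y $ j) = (\<Sum>x<n. (cond_XgY PXY *\<^sub>v y) $ x)"
    using sum_mult_mat_vec_col_stochastic[OF cond_XgY_carrier[OF PXY] _ y_carrier]
      cond_XgY_col_sum[OF PXY] PY by simp
  also have "\<dots> = (\<Sum>x<n. marg_X PXY $ x) + eps * (\<Sum>x<n. J $ x)"
    using cond_XgY_mult_S_set[OF PXY nm PY inv svd J y] PXY J
    by (simp add: marg_X_def sum.distrib sum_distrib_left)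
  also have "\<dots> = 1"
    using PXY PXY_sum J_sum by (simp add: marg_X_def)
  finally show ?thesis
    using y_carrier y_nonneg by (simp add: is_prob_vec_def)
qed

theorem lemma3:
  fixes n m :: nat and PXY U Sig V :: "real mat" and eps :: real
  assumes nm: "n < m"
    and PXY_carrier: "PXY \<in> carrier_mat n m"
    and PXY_nonneg: "\<forall>x<n. \<forall>y<m. PXY $$ (x, y) \<ge> 0"
    and PXY_sum: "(\<Sum>x<n. \<Sum>y<m. PXY $$ (x, y)) = 1"
    and PX_pos: "\<forall>x<n. marg_X PXY $ x > 0"
    and PY_pos: "\<forall>y<m. marg_Y PXY $ y > 0"
    and full_row_rank: "\<forall>c \<in> carrier_vec n.
                          transpose_mat (cond_XgY PXY) *\<^sub>v c = 0\<^sub>v m \<longrightarrow> c = 0\<^sub>v n"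
    and P1_inv: "invertible_mat (first_block (cond_XgY PXY))"
    and svd: "is_svd (cond_XgY PXY) U Sig V"
    and eps_pos: "eps > 0"
  shows
    "(\<forall>J \<in> carrier_vec n.
        (\<Sum>x<n. J $ x) = 0 \<longrightarrow> (\<Sum>x<n. \<bar>J $ x\<bar>) \<le> 1 \<longrightarrow>
        (\<forall>y \<in> S_set PXY V eps J. is_prob_vec y))
     \<and>
     (\<forall>(Uset :: 'u set) (PYU :: nat \<Rightarrow> 'u \<Rightarrow> real) (Jf :: 'u \<Rightarrow> real vec).
        finite Uset \<longrightarrow>
        (\<forall>y<m. \<forall>u\<in>Uset. PYU y u \<ge> 0) \<longrightarrow>
        (\<forall>u\<in>Uset. (\<Sum>y<m. PYU y u) > 0) \<longrightarrow>
        (\<forall>y<m. (\<Sum>u\<in>Uset. PYU y u) = marg_Y PXY $ y) \<longrightarrow>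
        (\<forall>u\<in>Uset. Jf u \<in> carrier_vec n) \<longrightarrow>
        (\<forall>u\<in>Uset. (\<Sum>x<n. Jf u $ x) = 0) \<longrightarrow>
        (\<forall>x<n. (\<Sum>u\<in>Uset. (\<Sum>y<m. PYU y u) * Jf u $ x) = 0) \<longrightarrow>
        (\<forall>u\<in>Uset. (\<Sum>x<n. \<bar>Jf u $ x\<bar>) \<le> 1) \<longrightarrow>
        (\<forall>u\<in>Uset. vec m (\<lambda>y. PYU y u / (\<Sum>y'<m. PYU y' u)) \<in> S_set PXY V eps (Jf u)) \<longrightarrow>
        (\<forall>u\<in>Uset. \<forall>x<n.
           (\<Sum>y<m. cond_XgY PXY $$ (x, y) * PYU y u) / (\<Sum>y<m. PYU y u)
             - marg_X PXY $ x = eps * Jf u $ x))"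
proof (intro conjI allI impI ballI)
  have nm': "n \<le> m" and PY: "\<forall>y<m. marg_Y PXY $ y \<noteq> 0"
    using nm PY_pos by auto
  note P_carrier = cond_XgY_carrier[OF PXY_carrier]
  show "is_prob_vec y" if "J \<in> carrier_vec n" "(\<Sum>x<n. J $ x) = 0" "y \<in> S_set PXY V eps J" for J y
    using S_set_is_prob_vec[OF PXY_carrier nm' PXY_sum PY P1_inv svd that] .
  fix Uset :: "'u set" and PYU :: "nat \<Rightarrow> 'u \<Rightarrow> real" and Jf :: "'u \<Rightarrow> real vec" and u x
  assume J: "\<forall>u\<in>Uset. Jf u \<in> carrier_vec n"
    and S: "\<forall>u\<in>Uset. vec m (\<lambda>y. PYU y u / (\<Sum>y'<m. PYU y' u)) \<in> S_set PXY V eps (Jf u)"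
    and u: "u \<in> Uset" and x: "x < n"
  have "(\<Sum>y<m. cond_XgY PXY $$ (x, y) * PYU y u) / (\<Sum>y<m. PYU y u)
      = (cond_XgY PXY *\<^sub>v vec m (\<lambda>y. PYU y u / (\<Sum>y'<m. PYU y' u))) $ x"
    using P_carrier x by (simp add: scalar_prod_def lessThan_atLeast0 sum_divide_distrib)
  also have "\<dots> = marg_X PXY $ x + eps * Jf u $ x"
    using cond_XgY_mult_S_set[OF PXY_carrier nm' PY P1_inv svd J[rule_format, OF u] S[rule_format, OF u]]
      J[rule_format, OF u] x PXY_carrier
    by (simp add: marg_X_def)
  finally show "(\<Sum>y<m. cond_XgY PXY $$ (x, y) * PYU y u) / (\<Sum>y<m. PYU y u)
      - marg_X PXY $ x = eps * Jf u $ x" by simp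
qed

end
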